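(* (1) For $2\le j\le d$, $m\in\mathbb Z$ and $n\in\mathbb Z_{\ge0}$, $v^{1j}(m,n)M_r^{(1)}=\{0\}$. (2) For $2\le i\le j\le d$ and $m,n\in\mathbb Z$ such that $v^{ij}(m,n)\in\mathcal B_+$, $v^{ij}(m,n)M_r^{(1)}=\{0\}$.
   Context: Fix an integer $d\ge 2$ and $r\in\mathbb{C}$. Let $\hat{\mathfrak h}$ be the complex Lie algebra with basis $\{v^i(m)\mid 1\le i\le d,\ m\in\mathbb{Z}\}\cup\{\mathbf c\}$ and bracket $[v^i(m),v^j(n)]=\delta_{m+n,0}\delta_{i,j}\,m\,\mathbf c$, $[\mathbf c,\hat{\mathfrak h}]=0$. In $A=U(\hat{\mathfrak h})/\langle \mathbf c-1\rangle$ let $v^{ij}(m,n)$ be the image of $v^i(m)v^j(n)$; then $v^{ij}(m,n)=v^{ji}(n,m)$ unless $i=j$ and $m=-n$, and $v^{ii}(m,-m)=v^{ii}(-m,m)+m$. Let $\mathcal B=\{v^{ii}(m,n)\mid 1\le i\le d,\ m\le n\}\cup\{v^{ij}(m,n)\mid 1\le i<j\le d,\ m,n\in\mathbb Z\}$; then $\mathcal B\cup\{1\}$ is linearly independent, $\mathcal L:=\mathrm{span}_{\mathbb C}\mathcal B\oplus\mathbb C\subset A$ contains every $v^{ij}(m,n)$ and is closed under $[x,y]=xy-yx$. With $\pi_1,\pi_2$ the projections of $\mathcal L$ onto $\mathrm{span}\,\mathcal B$ and onto $\mathbb C$, $[x,y]_r=\pi_1([x,y])+r\pi_2([x,y])$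 is a Lie bracket on $\mathcal L$; call this Lie algebra $\mathcal L_r$. Let $\mathcal B_+=\{v^{ij}(m,n)\in\mathcal B\mid m\ge 0\text{ or }n\ge 0\}$, $\mathcal L_r^+=\mathrm{span}\,\mathcal B_+\oplus\mathbb C$, and $M_r=U(\mathcal L_r)\otimes_{U(\mathcal L_r^+)}\mathbb C\mathbf 1$, where $\mathcal B_+$ acts by $0$ on $\mathbf 1$ and $s\in\mathbb C\subset\mathcal L_r$ acts by the scalar $s$. Let $\mathcal L_r^{(1)}$ be the Lie subalgebra of $\mathcal L_r$ generated by $\{v^{11}(m,n)\mid m,n\in\mathbb Z,\ m\le n\}$ and $M_r^{(1)}=U(\mathcal L_r^{(1)})\mathbf 1\subset M_r$. *)

theory Defs
  imports Complex_Main
begin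

text \<open>V i j m n stands for the element v^{ij}(m,n) of A; One stands for the
  element 1 of the summand C of L.\<close>

datatype lidx = V nat nat int int | One

definition inB :: "nat \<Rightarrow> lidx \<Rightarrow> bool" where
  "inB d c = (case c of
      V i j m n \<Rightarrow> 1 \<le> i \<and> i \<le> d \<and> 1 \<le> j \<and> j \<le> d \<and> ((i = j \<and> m \<le> n) \<or> i < j)
    | One \<Rightarrow> False)"

definition inL :: "nat \<Rightarrow> lidx \<Rightarrow> bool" where
  "inL d c = (c = One \<or> inB d c)"

definition inBplus :: "nat \<Rightarrow> lidx \<Rightarrow> bool" where
  "inBplus d c = (inB d c \<and> (case c of V i j m n \<Rightarrow> m \<ge> 0 \<or> n \<ge> 0 | One \<Rightarrow> False))"

type_synonym lelem = "lidx \<Rightarrow> complex"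

definition lsingle :: "lidx \<Rightarrow> lelem" where
  "lsingle c = (\<lambda>x. if x = c then 1 else 0)"

text \<open>The element v^{ij}(m,n) of A expressed in the basis B union {1}, using
  v^{ij}(m,n) = v^{ji}(n,m) unless i = j and m = -n, and
  v^{ii}(m,-m) = v^{ii}(-m,m) + m.\<close>
definition quad :: "nat \<Rightarrow> int \<Rightarrow> nat \<Rightarrow> int \<Rightarrow> lelem" where
  "quad i m j n =
     (if i < j then lsingle (V i j m n)
      else if j < i then lsingle (V j i n m)
      else if m \<le> n then lsingle (V i i m n)
      else (\<lambda>x. lsingle (V i i n m) x + (if m = - n then of_int m * lsingle One x else 0)))"

text \<open>Commutator [v^i(m), v^k(p)] = delta_{ik} delta_{m+p,0} m in A (c = 1).\<close>
definition hc :: "nat \<Rightarrow> int \<Rightarrow> nat \<Rightarrow> int \<Rightarrow> complex" where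
  "hc i m k p = (if i = k \<and> m + p = 0 then of_int m else 0)"

text \<open>Commutator in A of two basis elements of L (an element of L):
  [AB, CD] = [B,C] AD + [B,D] AC + [A,C] DB + [A,D] CB, with A = v^i(m),
  B = v^j(n), C = v^k(p), D = v^l(q); the constants are central.\<close>
fun brA :: "lidx \<Rightarrow> lidx \<Rightarrow> lelem" where
  "brA (V i j m n) (V k l p q) =
     (\<lambda>x. hc j n k p * quad i m l q x + hc j n l q * quad i m k p x
        + hc i m k p * quad l q j n x + hc i m l q * quad k p j n x)"
| "brA One _ = (\<lambda>x. 0)"
| "brA _ One = (\<lambda>x. 0)"

text \<open>The bracket [x,y]_r = pi_1([x,y]) + r pi_2([x,y]) on basis elements.\<close>
definition brr :: "complex \<Rightarrow> lidx \<Rightarrow> lidx \<Rightarrow> lelem" where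
  "brr r a b = (\<lambda>x. if x = One then r * brA a b x else brA a b x)"

definition lbr :: "complex \<Rightarrow> lelem \<Rightarrow> lelem \<Rightarrow> lelem" where
  "lbr r f g = (\<lambda>x. \<Sum>a\<in>{a. f a \<noteq> 0}. \<Sum>b\<in>{b. g b \<noteq> 0}. f a * g b * brr r a b x)"

type_synonym telem = "lidx list \<Rightarrow> complex"

definition tmul :: "telem \<Rightarrow> telem \<Rightarrow> telem" where
  "tmul f g = (\<lambda>w. \<Sum>k\<le>length w. f (take k w) * g (drop k w))"

definition wrd :: "lidx list \<Rightarrow> telem" where
  "wrd u = (\<lambda>w. if w = u then 1 else 0)"

definition iota :: "lelem \<Rightarrow> telem" where
  "iota f = (\<lambda>w. if length w = 1 then f (hd w) else 0)"

text \<open>J is the kernel of T(L) \<rightarrow> U(L_r) \<rightarrow> M_r, u \<mapsto> u \<cdot> 1: the span of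
  u (a b - b a - [a,b]_r) w (Lie relations of U(L_r)) and of
  u (x - chi(x)) for x in a basis of L_r^+ (B_+ acts by 0, 1 acts by 1).\<close>
inductive_set Jset :: "nat \<Rightarrow> complex \<Rightarrow> telem set" for d r where
  J_zero: "(\<lambda>w. 0) \<in> Jset d r"
| J_add: "f \<in> Jset d r \<Longrightarrow> g \<in> Jset d r \<Longrightarrow> (\<lambda>w. f w + g w) \<in> Jset d r"
| J_smult: "f \<in> Jset d r \<Longrightarrow> (\<lambda>w. c * f w) \<in> Jset d r"
| J_lie: "inL d a \<Longrightarrow> inL d b \<Longrightarrow>
    tmul (tmul (wrd u) (\<lambda>w. wrd [a, b] w - wrd [b, a] w - iota (brr r a b) w)) (wrd v) \<in> Jset d r"
| J_plus: "inBplus d a \<Longrightarrow> tmul (wrd u) (wrd [a]) \<in> Jset d r"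
| J_one: "tmul (wrd u) (\<lambda>w. wrd [One] w - wrd [] w) \<in> Jset d r"

inductive_set L1set :: "complex \<Rightarrow> lelem set" for r where
  L1_gen: "m \<le> n \<Longrightarrow> lsingle (V 1 1 m n) \<in> L1set r"
| L1_add: "f \<in> L1set r \<Longrightarrow> g \<in> L1set r \<Longrightarrow> (\<lambda>x. f x + g x) \<in> L1set r"
| L1_smult: "f \<in> L1set r \<Longrightarrow> (\<lambda>x. c * f x) \<in> L1set r"
| L1_br: "f \<in> L1set r \<Longrightarrow> g \<in> L1set r \<Longrightarrow> lbr r f g \<in> L1set r"

text \<open>Representatives in T(L) of U(L_r^(1)) 1: the span of x_1 ... x_k with x_i in L_r^(1).\<close>
inductive_set U1set :: "complex \<Rightarrow> telem set" for r where
  U1_one: "wrd [] \<in> U1set r"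
| U1_mul: "x \<in> L1set r \<Longrightarrow> p \<in> U1set r \<Longrightarrow> tmul (iota x) p \<in> U1set r"
| U1_add: "f \<in> U1set r \<Longrightarrow> g \<in> U1set r \<Longrightarrow> (\<lambda>w. f w + g w) \<in> U1set r"
| U1_smult: "f \<in> U1set r \<Longrightarrow> (\<lambda>w. c * f w) \<in> U1set r"

definition annihilates_M1 :: "nat \<Rightarrow> complex \<Rightarrow> lelem \<Rightarrow> bool" where
  "annihilates_M1 d r x = (\<forall>p\<in>U1set r. tmul (iota x) p \<in> Jset d r)"

end

theory Submission
  imports Defs
begin

text \<open>Call a set T of basis elements ad-stable if it lies in B_+ and
  bracketing an element of T with one of the spanning elements v^{11}(m,n), 1 of L_r^(1) stays in
  the span of T. Then every x supported on T kills U(L_r^(1)) 1, by induction on monomials: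
  x 1 = 0 because x lies in L_r^+, and x y p = y (x p) + [x,y] p with both terms zero by
  induction, J being a left ideal. For (1) take T = {v^{1j}(m,n) | n \<ge> 0}: bracketing with
  v^{11} only moves the first mode. For (2) take T = {v^{ij}(m,n)}, which commutes with
  L_r^(1) since i, j \<ge> 2.\<close>

abbreviation supp :: "('a \<Rightarrow> 'b::zero) \<Rightarrow> 'a set" where
  "supp f \<equiv> {x. f x \<noteq> 0}"

lemma tmul_assoc: "tmul (tmul f g) h = tmul f (tmul g h)"
proof (rule ext)
  fix w
  let ?F = "\<lambda>j i. f (take j w) * g (take i (drop j w)) * h (drop (j + i) w)"
  have "tmul (tmul f g) h w = (\<Sum>k\<le>length w. \<Sum>j\<le>k. ?F j (k - j))"
    unfolding tmul_def sum_distrib_right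
    by (intro sum.cong refl) (auto simp: drop_take min_def)
  also have "\<dots> = (\<Sum>(j, i)\<in>{(j, i). j + i \<le> length w}. ?F j i)"
    by (rule sum.triangle_reindex_eq[symmetric])
  also have "\<dots> = (\<Sum>j\<le>length w. \<Sum>i\<le>length w - j. ?F j i)"
    by (simp add: pairs_le_eq_Sigma sum.Sigma)
  also have "\<dots> = tmul f (tmul g h) w"
    unfolding tmul_def sum_distrib_left
    by (intro sum.cong) (simp_all add: mult.assoc add.commute)
  finally show "tmul (tmul f g) h w = tmul f (tmul g h) w" .
qed

lemma tmul_wrd_left: "tmul (wrd u) g w = (if take (length u) w = u then g (drop (length u) w) else 0)"
proof -
  have "tmul (wrd u) g w = (\<Sum>k\<le>length w. if k = length u then (if take k w = u then g (drop k w) else 0) else 0)"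
    unfolding tmul_def wrd_def by (rule sum.cong) auto
  also have "\<dots> = (if take (length u) w = u then g (drop (length u) w) else 0)"
    by (auto simp: min_def dest: arg_cong[of _ _ length])
  finally show ?thesis .
qed

lemma tmul_wrd_wrd: "tmul (wrd u) (wrd v) = wrd (u @ v)"
proof (rule ext)
  fix w
  show "tmul (wrd u) (wrd v) w = wrd (u @ v) w"
    unfolding tmul_wrd_left by (auto simp: wrd_def append_eq_conv_conj) (metis append_take_drop_id)
qed

lemma tmul_wrd_Nil_left: "tmul (wrd []) g = g"
  by (rule ext) (simp add: tmul_wrd_left)

lemma tmul_wrd_Nil_right: "tmul f (wrd []) = f"
proof (rule ext)
  fix w
  have "tmul f (wrd []) w = (\<Sum>k\<le>length w. if k = length w then f (take k w) else 0)"
    unfolding tmul_def wrd_def by (rule sum.cong) auto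
  then show "tmul f (wrd []) w = f w" by simp
qed

lemma tmul_zero_right: "tmul f (\<lambda>w. 0) = (\<lambda>w. 0)"
  by (simp add: tmul_def)

lemma tmul_add_left: "tmul (\<lambda>w. f w + g w) h = (\<lambda>w. tmul f h w + tmul g h w)"
  unfolding tmul_def by (rule ext) (simp add: distrib_right sum.distrib)

lemma tmul_add_right: "tmul f (\<lambda>w. g w + h w) = (\<lambda>w. tmul f g w + tmul f h w)"
  unfolding tmul_def by (rule ext) (simp add: distrib_left sum.distrib)

lemma tmul_smult_right: "tmul f (\<lambda>w. c * g w) = (\<lambda>w. c * tmul f g w)"
  unfolding tmul_def by (rule ext) (simp add: sum_distrib_left mult.left_commute)

lemma tmul_sum_left: "tmul (\<lambda>w. \<Sum>i\<in>I. c i * f i w) g = (\<lambda>w. \<Sum>i\<in>I. c i * tmul (f i) g w)"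
  unfolding tmul_def
  by (rule ext) (simp add: sum_distrib_left sum_distrib_right sum.swap[of _ I] mult.assoc)

lemma tmul_sum_right: "tmul f (\<lambda>w. \<Sum>i\<in>I. c i * g i w) = (\<lambda>w. \<Sum>i\<in>I. c i * tmul f (g i) w)"
  unfolding tmul_def
  by (rule ext) (simp add: sum_distrib_left sum.swap[of _ I] mult.left_commute)

lemma telem_expansion:
  assumes "finite (supp f)"
  shows "f = (\<lambda>w. \<Sum>v\<in>supp f. f v * wrd v w)"
proof (rule ext)
  fix w
  have "(\<Sum>v\<in>supp f. f v * wrd v w) = (\<Sum>v\<in>supp f. if v = w then f w else 0)"
    unfolding wrd_def by (rule sum.cong) auto
  then show "f w = (\<Sum>v\<in>supp f. f v * wrd v w)"
    using assms by simp
qed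

lemma iota_expansion:
  assumes "finite (supp x)"
  shows "iota x = (\<lambda>w. \<Sum>a\<in>supp x. x a * wrd [a] w)"
proof (rule ext)
  fix w
  show "iota x w = (\<Sum>a\<in>supp x. x a * wrd [a] w)"
  proof (cases "length w = 1")
    case True
    then obtain c where w: "w = [c]"
      by (cases w) auto
    have "(\<Sum>a\<in>supp x. x a * wrd [a] w) = (\<Sum>a\<in>supp x. if a = c then x c else 0)"
      unfolding wrd_def w by (rule sum.cong) auto
    then show ?thesis
      using assms by (simp add: iota_def w)
  next
    case False
    then show ?thesis
      by (auto simp: iota_def wrd_def intro!: sum.neutral)
  qed
qed

lemma iota_lsingle: "iota (lsingle a) = wrd [a]"
  by (rule ext) (auto simp: iota_def lsingle_def wrd_def length_Suc_conv)

lemma tmul_iota_left: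
  assumes "finite (supp x)"
  shows "tmul (iota x) g = (\<lambda>w. \<Sum>a\<in>supp x. x a * tmul (wrd [a]) g w)"
  by (subst iota_expansion[OF assms]) (rule tmul_sum_left)

lemma finite_supp_tmul:
  assumes "finite (supp f)" "finite (supp g)"
  shows "finite (supp (tmul f g))"
proof (rule finite_subset)
  show "supp (tmul f g) \<subseteq> (\<lambda>(u, v). u @ v) ` (supp f \<times> supp g)"
  proof
    fix w assume "w \<in> supp (tmul f g)"
    then obtain k where "f (take k w) * g (drop k w) \<noteq> 0"
      unfolding tmul_def by (auto elim: sum.not_neutral_contains_not_neutral)
    then show "w \<in> (\<lambda>(u, v). u @ v) ` (supp f \<times> supp g)"
      by (auto intro!: image_eqI[where x = "(take k w, drop k w)"])
  qed
qed (use assms in blast)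

lemma finite_supp_iota: "finite (supp x) \<Longrightarrow> finite (supp (iota x))"
  by (rule finite_subset[where B = "(\<lambda>a. [a]) ` supp x"])
     (auto simp: iota_def length_Suc_conv split: if_splits)

definition lie_relation :: "complex \<Rightarrow> lidx \<Rightarrow> lidx \<Rightarrow> telem" where
  "lie_relation r a b = (\<lambda>w. wrd [a, b] w - wrd [b, a] w - iota (brr r a b) w)"

lemma Jset_sum:
  assumes "finite I" "\<And>i. i \<in> I \<Longrightarrow> f i \<in> Jset d r"
  shows "(\<lambda>w. \<Sum>i\<in>I. c i * f i w) \<in> Jset d r"
  using assms
proof (induction I rule: finite_induct)
  case empty
  then show ?case by (simp add: Jset.J_zero)
next
  case (insert i I)
  then have "(\<lambda>w. c i * f i w + (\<Sum>i\<in>I. c i * f i w)) \<in> Jset d r"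
    by (intro Jset.J_add Jset.J_smult) auto
  with insert show ?case by simp
qed

lemma Jset_left_ideal: "f \<in> Jset d r \<Longrightarrow> tmul (wrd u) f \<in> Jset d r"
proof (induction rule: Jset.induct)
  case J_zero
  show ?case by (simp add: tmul_zero_right Jset.J_zero)
next
  case (J_add f g)
  then show ?case by (simp add: tmul_add_right Jset.J_add)
next
  case (J_smult f c)
  then show ?case by (simp add: tmul_smult_right Jset.J_smult)
next
  case (J_lie a b v w)
  then show ?case
    using Jset.J_lie[where u = "u @ v" and v = w] by (simp add: tmul_assoc[symmetric] tmul_wrd_wrd)
next
  case (J_plus a v)
  then show ?case
    using Jset.J_plus[where u = "u @ v"] by (simp add: tmul_assoc[symmetric] tmul_wrd_wrd)
next
  case (J_one v)
  show ?case
    using Jset.J_one[where u = "u @ v"] by (simp add: tmul_assoc[symmetric] tmul_wrd_wrd)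
qed

lemma lie_relation_tmul_in_Jset:
  assumes "inL d a" "inL d b" "finite (supp g)"
  shows "tmul (lie_relation r a b) g \<in> Jset d r"
proof -
  have "\<And>v. tmul (tmul (wrd []) (lie_relation r a b)) (wrd v) \<in> Jset d r"
    using assms(1,2) unfolding lie_relation_def by (rule Jset.J_lie)
  then have "(\<lambda>w. \<Sum>v\<in>supp g. g v * tmul (lie_relation r a b) (wrd v) w) \<in> Jset d r"
    using assms(3) by (intro Jset_sum) (simp_all add: tmul_wrd_Nil_left)
  then show ?thesis
    by (subst telem_expansion[OF assms(3)]) (simp only: tmul_sum_right)
qed

definition L1_basis :: "lidx set" where
  "L1_basis = insert One {V 1 1 p q | p q. p \<le> q}"

lemma supp_add: "supp (\<lambda>x. f x + g x) \<subseteq> supp f \<union> supp (g :: 'a \<Rightarrow> 'b::monoid_add)"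
  by auto

lemma supp_smult: "supp (\<lambda>x. c * f x) \<subseteq> supp (f :: 'a \<Rightarrow> 'b::mult_zero)"
  by auto

lemma supp_quad: "supp (quad i m j n) \<subseteq> {V i j m n, V j i n m, One}"
  by (auto simp: quad_def lsingle_def split: if_splits)

lemma brr_One_left: "brr r One b = (\<lambda>z. 0)"
  by (cases b) (auto simp: brr_def)

lemma brr_One_right: "brr r a One = (\<lambda>z. 0)"
  by (cases a) (auto simp: brr_def)

lemma finite_supp_brr: "finite (supp (brr r a b))"
proof (cases a; cases b)
  fix i j m n k l p q
  assume "a = V i j m n" "b = V k l p q"
  then have "supp (brr r a b) \<subseteq> supp (quad i m l q) \<union> supp (quad i m k p) \<union> supp (quad l q j n) \<union> supp (quad k p j n)"
    by (auto simp: brr_def split: if_splits)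
  then show ?thesis
    by (rule finite_subset) (intro finite_UnI finite_subset[OF supp_quad]; simp)
qed (simp_all add: brr_One_left brr_One_right)

lemma brr_L1_basis: "a \<in> L1_basis \<Longrightarrow> b \<in> L1_basis \<Longrightarrow> z \<in> supp (brr r a b) \<Longrightarrow> z \<in> L1_basis"
  by (auto simp: L1_basis_def brr_def quad_def lsingle_def hc_def split: if_splits)

lemma supp_lbr: "supp (lbr r f g) \<subseteq> (\<Union>a\<in>supp f. \<Union>b\<in>supp g. supp (brr r a b))"
proof
  fix z assume "z \<in> supp (lbr r f g)"
  then obtain a where "a \<in> supp f" "(\<Sum>b\<in>supp g. f a * g b * brr r a b z) \<noteq> 0"
    unfolding lbr_def by (auto elim: sum.not_neutral_contains_not_neutral)
  then obtain b where "b \<in> supp g" "f a * g b * brr r a b z \<noteq> 0"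
    by (auto elim: sum.not_neutral_contains_not_neutral)
  with \<open>a \<in> supp f\<close> show "z \<in> (\<Union>a\<in>supp f. \<Union>b\<in>supp g. supp (brr r a b))"
    by auto
qed

lemma L1set_finite_supp: "f \<in> L1set r \<Longrightarrow> finite (supp f)"
proof (induction rule: L1set.induct)
  case (L1_gen m n)
  then show ?case by (simp add: lsingle_def)
next
  case (L1_add f g)
  then show ?case by (simp add: finite_subset[OF supp_add])
next
  case (L1_smult f c)
  then show ?case by (simp add: finite_subset[OF supp_smult])
next
  case (L1_br f g)
  then show ?case by (simp add: finite_subset[OF supp_lbr] finite_supp_brr)
qed

lemma L1set_supp: "f \<in> L1set r \<Longrightarrow> supp f \<subseteq> L1_basis"
proof (induction rule: L1set.induct)
  case (L1_gen m n)
  then show ?case by (auto simp: L1_basis_def lsingle_def)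
next
  case (L1_add f g)
  then show ?case using supp_add[of f g] by blast
next
  case (L1_smult f c)
  then show ?case using supp_smult[of c f] by blast
next
  case (L1_br f g)
  then show ?case using supp_lbr[of r f g] brr_L1_basis by blast
qed

lemma U1set_finite_supp: "p \<in> U1set r \<Longrightarrow> finite (supp p)"
proof (induction rule: U1set.induct)
  case U1_one
  then show ?case by (simp add: wrd_def)
next
  case (U1_mul x p)
  then show ?case by (simp add: finite_supp_tmul finite_supp_iota L1set_finite_supp)
next
  case (U1_add f g)
  then show ?case by (simp add: finite_subset[OF supp_add])
next
  case (U1_smult f c)
  then show ?case by (simp add: finite_subset[OF supp_smult])
qed

lemma tmul_wrd_pair_in_Jset:
  assumes "inL d a" "inL d b" "finite (supp p)"
    and "tmul (wrd [a]) p \<in> Jset d r" "tmul (iota (brr r a b)) p \<in> Jset d r"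
  shows "tmul (wrd [a, b]) p \<in> Jset d r"
proof -
  have "wrd [a, b] = (\<lambda>w. lie_relation r a b w + wrd [b, a] w + iota (brr r a b) w)"
    by (simp add: lie_relation_def)
  then have "tmul (wrd [a, b]) p
      = (\<lambda>w. tmul (lie_relation r a b) p w + tmul (wrd [b]) (tmul (wrd [a]) p) w + tmul (iota (brr r a b)) p w)"
    by (simp add: tmul_add_left tmul_assoc[symmetric] tmul_wrd_wrd)
  moreover have "tmul (lie_relation r a b) p \<in> Jset d r"
    using assms(1-3) by (rule lie_relation_tmul_in_Jset)
  moreover have "tmul (wrd [b]) (tmul (wrd [a]) p) \<in> Jset d r"
    using assms(4) by (rule Jset_left_ideal)
  ultimately show ?thesis
    using assms(5) by (simp add: Jset.J_add)
qed

definition ad_L1_stable :: "complex \<Rightarrow> lidx set \<Rightarrow> bool" where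
  "ad_L1_stable r T \<longleftrightarrow> (\<forall>c\<in>T. \<forall>b\<in>L1_basis. supp (brr r c b) \<subseteq> T)"

lemma tmul_iota_U1set_in_Jset:
  assumes T: "T \<subseteq> Collect (inBplus d)" "ad_L1_stable r T" and "1 \<le> d"
    and "p \<in> U1set r" "finite (supp x)" "supp x \<subseteq> T"
  shows "tmul (iota x) p \<in> Jset d r"
  using assms(4-6)
proof (induction p arbitrary: x rule: U1set.induct)
  case U1_one
  have "wrd [a] \<in> Jset d r" if "a \<in> supp x" for a
    using Jset.J_plus[of d a "[]" r] that U1_one T(1) by (auto simp: tmul_wrd_Nil_left)
  then have "(\<lambda>w. \<Sum>a\<in>supp x. x a * wrd [a] w) \<in> Jset d r"
    using U1_one by (intro Jset_sum) auto
  then show ?case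
    using U1_one by (simp add: tmul_wrd_Nil_right iota_expansion[symmetric])
next
  case (U1_mul y p)
  have y: "finite (supp y)" "supp y \<subseteq> L1_basis"
    using U1_mul.hyps(1) by (simp_all add: L1set_finite_supp L1set_supp)
  have "tmul (wrd [a, b]) p \<in> Jset d r" if a: "a \<in> T" and b: "b \<in> L1_basis" for a b
  proof (rule tmul_wrd_pair_in_Jset)
    show "inL d a" using a T(1) by (auto simp: inL_def inBplus_def)
    show "inL d b" using b \<open>1 \<le> d\<close> by (auto simp: inL_def inB_def L1_basis_def)
    show "finite (supp p)" using U1_mul.hyps(2) by (rule U1set_finite_supp)
    show "tmul (wrd [a]) p \<in> Jset d r"
      using U1_mul.IH[of "lsingle a"] a by (simp add: iota_lsingle[unfolded lsingle_def] lsingle_def)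
    show "tmul (iota (brr r a b)) p \<in> Jset d r"
      using U1_mul.IH a b T(2) by (simp add: finite_supp_brr ad_L1_stable_def)
  qed
  then have "tmul (wrd [a]) (tmul (iota y) p) \<in> Jset d r" if "a \<in> T" for a
    using that y by (auto simp: tmul_iota_left tmul_sum_right tmul_assoc[symmetric] tmul_wrd_wrd
        intro!: Jset_sum)
  then show ?case
    using U1_mul.prems by (auto simp: tmul_iota_left intro!: Jset_sum)
next
  case (U1_add f g)
  then show ?case by (simp add: tmul_add_right Jset.J_add)
next
  case (U1_smult f c)
  then show ?case by (simp add: tmul_smult_right Jset.J_smult)
qed

lemma ad_L1_stable_annihilates_M1:
  assumes "T \<subseteq> Collect (inBplus d)" "ad_L1_stable r T" "1 \<le> d" "c \<in> T"
  shows "annihilates_M1 d r (lsingle c)"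
  unfolding annihilates_M1_def
  using tmul_iota_U1set_in_Jset[OF assms(1-3)] assms(4) by (simp add: lsingle_def)

lemma quad_eq_lsingle: "inB d (V i j m n) \<Longrightarrow> quad i m j n = lsingle (V i j m n)"
  by (auto simp: quad_def inB_def)

lemma ad_L1_stable_V1j: "2 \<le> j \<Longrightarrow> ad_L1_stable r {V 1 j m n | m n. 0 \<le> n}"
  by (auto simp: ad_L1_stable_def L1_basis_def brr_One_right brr_def quad_def hc_def lsingle_def
      split: if_splits)

lemma ad_L1_stable_Vij: "2 \<le> i \<Longrightarrow> 2 \<le> j \<Longrightarrow> ad_L1_stable r {V i j m n}"
  by (auto simp: ad_L1_stable_def L1_basis_def brr_One_right brr_def hc_def)

theorem lemma4p6:
  fixes d :: nat and r :: complex
  assumes "2 \<le> d"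
  shows "(\<forall>j m n. 2 \<le> j \<and> j \<le> d \<and> 0 \<le> n \<longrightarrow> annihilates_M1 d r (quad 1 m j n))
       \<and> (\<forall>i j m n. 2 \<le> i \<and> i \<le> j \<and> j \<le> d \<and> inBplus d (V i j m n)
            \<longrightarrow> annihilates_M1 d r (quad i m j n))"
proof (intro conjI allI impI)
  fix j :: nat and m n :: int
  assume h: "2 \<le> j \<and> j \<le> d \<and> 0 \<le> n"
  let ?T = "{V 1 j m' n' | m' n'. 0 \<le> n'}"
  have "?T \<subseteq> Collect (inBplus d)"
    using h by (auto simp: inBplus_def inB_def)
  moreover have "ad_L1_stable r ?T"
    using h by (intro ad_L1_stable_V1j) simp
  ultimately have "annihilates_M1 d r (lsingle (V 1 j m n))"
    using h assms by (intro ad_L1_stable_annihilates_M1) auto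
  then show "annihilates_M1 d r (quad 1 m j n)"
    using h by (simp add: quad_def)
next
  fix i j :: nat and m n :: int
  assume h: "2 \<le> i \<and> i \<le> j \<and> j \<le> d \<and> inBplus d (V i j m n)"
  then have "annihilates_M1 d r (lsingle (V i j m n))"
    using assms ad_L1_stable_Vij[of i j r m n]
    by (intro ad_L1_stable_annihilates_M1[where T = "{V i j m n}"]) auto
  moreover have "quad i m j n = lsingle (V i j m n)"
    using h quad_eq_lsingle[of d] by (simp add: inBplus_def)
  ultimately show "annihilates_M1 d r (quad i m j n)"
    by simp
qed

end
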